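(* Let $X$ be a Tychonoff space whose $P$-number is $\tau$, and suppose $X$ has a $\tau$-discrete basis of clopen sets. Then $X^n$ is a generalized ordered space for every natural number $n$.
   Context: All spaces are Tychonoff. The $P$-number of a space $X$ is $|X|$ if $X$ is discrete; otherwise it is the largest cardinal $\tau$ such that the intersection of any family of fewer than $\tau$ open subsets of $X$ is open. A family of subsets of $X$ is discrete if every point of $X$ has a neighborhood meeting at most one member of the family. A $\tau$-discrete basis of clopen sets is a base for the topology of the form $\bigcup_{\alpha<\tau}\mathcal B_\alpha$ consisting of clopen sets, with each $\mathcal B_\alpha$ a discrete family. A generalized ordered space (GO-space) is a space homeomorphic to a subspace of a linearly ordered topological space (a space whose topology is generated by open intervals and open rays of some linear order). *)

theory Defs
  imports "HOL-Analysis.Analysis" "HOL-Library.Equipollence"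
begin

definition tychonoff_space :: "'a topology \<Rightarrow> bool" where
  "tychonoff_space X \<longleftrightarrow> completely_regular_space X \<and> t1_space X"

definition discrete_space :: "'a topology \<Rightarrow> bool" where
  "discrete_space X \<longleftrightarrow> (\<forall>x \<in> topspace X. openin X {x})"

text \<open>The cardinal tau is represented as the cardinality of an index set I.
  The intersection of the empty family is taken to be the whole space.
  "I is the P-number of X": if X is discrete, |I| = |X|; otherwise every
  family of fewer than |I| open sets has open intersection, and |I| is the
  largest such cardinal, i.e. the property fails for every larger cardinal,
  equivalently for the successor of |I|: some family of at most |I| open sets
  has non-open intersection.\<close>
definition P_number :: "'a topology \<Rightarrow> 'i set \<Rightarrow> bool" where
  "P_number X I \<longleftrightarrow>
     (if discrete_space X then topspace X \<approx> I
      else (\<forall>\<F>. (\<forall>U\<in>\<F>. openin X U) \<and> \<F> \<prec> I \<longrightarrow> openin X (topspace X \<inter> \<Inter>\<F>))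
         \<and> (\<exists>\<F>. (\<forall>U\<in>\<F>. openin X U) \<and> \<F> \<lesssim> I \<and> \<not> openin X (topspace X \<inter> \<Inter>\<F>)))"

definition discrete_family :: "'a topology \<Rightarrow> 'a set set \<Rightarrow> bool" where
  "discrete_family X \<A> \<longleftrightarrow>
     (\<forall>x \<in> topspace X. \<exists>U. openin X U \<and> x \<in> U \<and>
        (\<forall>A \<in> \<A>. \<forall>B \<in> \<A>. A \<inter> U \<noteq> {} \<and> B \<inter> U \<noteq> {} \<longrightarrow> A = B))"

definition is_base :: "'a topology \<Rightarrow> 'a set set \<Rightarrow> bool" where
  "is_base X \<B> \<longleftrightarrow> (\<forall>B \<in> \<B>. openin X B) \<and>
     (\<forall>U x. openin X U \<and> x \<in> U \<longrightarrow> (\<exists>B \<in> \<B>. x \<in> B \<and> B \<subseteq> U))"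

definition has_discrete_clopen_base :: "'a topology \<Rightarrow> 'i set \<Rightarrow> bool" where
  "has_discrete_clopen_base X I \<longleftrightarrow>
     (\<exists>\<B> :: 'i \<Rightarrow> 'a set set.
        (\<forall>\<alpha> \<in> I. discrete_family X (\<B> \<alpha>)) \<and>
        (\<forall>\<alpha> \<in> I. \<forall>B \<in> \<B> \<alpha>. openin X B \<and> closedin X B) \<and>
        is_base X (\<Union>\<alpha> \<in> I. \<B> \<alpha>))"

text \<open>Linearly ordered topological space: the topology on the carrier S is
  generated by the open intervals and open rays of a linear order r on S
  (together with S itself, which is open in any case).\<close>
definition order_basic_sets :: "'b set \<Rightarrow> 'b rel \<Rightarrow> 'b set set" where
  "order_basic_sets S r =
     {S} \<union>
     {{x \<in> S. (a, x) \<in> r \<and> a \<noteq> x \<and> (x, b) \<in> r \<and> x \<noteq> b} | a b. a \<in> S \<and> b \<in> S} \<union>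
     {{x \<in> S. (a, x) \<in> r \<and> a \<noteq> x} | a. a \<in> S} \<union>
     {{x \<in> S. (x, a) \<in> r \<and> x \<noteq> a} | a. a \<in> S}"

definition LOTS :: "'b topology \<Rightarrow> bool" where
  "LOTS L \<longleftrightarrow> (\<exists>r. linear_order_on (topspace L) r \<and>
     (\<forall>U. openin L U \<longleftrightarrow> U \<subseteq> topspace L \<and>
        (\<forall>x \<in> U. \<exists>V \<in> order_basic_sets (topspace L) r. x \<in> V \<and> V \<subseteq> U)))"

text \<open>The carrier type of the
  LOTS is fixed to be the carrier type of X times int (every GO-space embeds in
  a lexicographically ordered LOTS contained in X x Z).\<close>
definition GO_space :: "'a topology \<Rightarrow> bool" where
  "GO_space X \<longleftrightarrow> (\<exists>(L :: ('a \<times> int) topology) S.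
     LOTS L \<and> S \<subseteq> topspace L \<and> X homeomorphic_space subtopology L S)"

end

theory Submission
  imports Defs
begin

text \<open>
  Let \<open>\<tau>\<close> be the P-number of \<open>X\<close> and \<open>\<Union>\<alpha><\<tau>. \<B> \<alpha>\<close> a clopen base with every \<open>\<B> \<alpha>\<close>
  discrete. If \<open>X\<close> is discrete, the singletons form the required structure below. Otherwise
  \<open>\<tau>\<close> is infinite; each \<open>\<B> \<alpha>\<close> together with the complement of its union is a clopen
  partition, and the common refinement of the first \<open>\<alpha>\<close> of these partitions is again
  open because fewer than \<open>\<tau>\<close> open sets have open intersection. This gives a
  well-ordered sequence of open partitions, each refining the previous ones, whose cells form
  a base. Such a sequence passes to finite powers by taking products of cells.

  A space with such a sequence is a GO-space: fix any linear order on cells and compare two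
  points by their cells at the first index where these differ. Cells are convex and the
  open rays are open, but a closed ray \<open>[y, \<rightarrow>)\<close> may be open as well; a LOTS containing the
  space is obtained by inserting a new point directly left of every such \<open>y\<close> (and dually).
\<close>

lemma linear_order_onD:
  assumes "linear_order_on L r"
  shows "trans r" "antisym r" "total_on L r" "refl_on L r"
  using assms unfolding linear_order_on_def partial_order_on_def preorder_on_def by auto

section \<open>The interval topology of a linear order\<close>

definition rays_above :: "'b set \<Rightarrow> 'b rel \<Rightarrow> 'b set set" where
  "rays_above L r = insert UNIV ((\<lambda>a. {x. (a, x) \<in> r \<and> a \<noteq> x}) ` L)"

lemma order_basic_sets_eq:
  "order_basic_sets L r = {L \<inter> A \<inter> B | A B. A \<in> rays_above L r \<and> B \<in> rays_above L (r\<inverse>)}"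
  (is "_ = ?R")
proof -
  let ?above = "\<lambda>a. {x. (a, x) \<in> r \<and> a \<noteq> x}" and ?below = "\<lambda>b. {x. (x, b) \<in> r \<and> x \<noteq> b}"
  have above: "?above a \<in> rays_above L r" and below: "?below a \<in> rays_above L (r\<inverse>)" if "a \<in> L" for a
    using that unfolding rays_above_def by auto
  have top: "UNIV \<in> rays_above L r" for r :: "'a rel"
    unfolding rays_above_def by simp
  have whole: "L \<in> ?R"
    using top[of r] top[of "r\<inverse>"] by (intro CollectI exI[of _ UNIV]) auto
  have interval: "{x \<in> L. (a, x) \<in> r \<and> a \<noteq> x \<and> (x, b) \<in> r \<and> x \<noteq> b} \<in> ?R" if "a \<in> L" "b \<in> L" for a b
    using above[OF that(1)] below[OF that(2)] by (intro CollectI exI[of _ "?above a"] exI[of _ "?below b"]) auto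
  have ray_above: "{x \<in> L. (a, x) \<in> r \<and> a \<noteq> x} \<in> ?R" if "a \<in> L" for a
    using above[OF that] top[of "r\<inverse>"] by (intro CollectI exI[of _ "?above a"] exI[of _ UNIV]) auto
  have ray_below: "{x \<in> L. (x, a) \<in> r \<and> x \<noteq> a} \<in> ?R" if "a \<in> L" for a
    using below[OF that] top[of r] by (intro CollectI exI[of _ UNIV] exI[of _ "?below a"]) auto
  show ?thesis
  proof (rule set_eqI, rule iffI)
    fix V assume "V \<in> order_basic_sets L r"
    then consider "V = L" | a b where "a \<in> L" "b \<in> L" "V = {x \<in> L. (a, x) \<in> r \<and> a \<noteq> x \<and> (x, b) \<in> r \<and> x \<noteq> b}"
      | a where "a \<in> L" "V = {x \<in> L. (a, x) \<in> r \<and> a \<noteq> x}"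
      | a where "a \<in> L" "V = {x \<in> L. (x, a) \<in> r \<and> x \<noteq> a}"
      unfolding order_basic_sets_def by blast
    then show "V \<in> ?R"
      by cases (simp_all only: whole interval ray_above ray_below)
  next
    fix V assume "V \<in> ?R"
    then obtain A B where V: "V = L \<inter> A \<inter> B" and "A \<in> rays_above L r" "B \<in> rays_above L (r\<inverse>)"
      by blast
    then consider "A = UNIV" "B = UNIV" | a where "a \<in> L" "A = ?above a" "B = UNIV"
      | b where "b \<in> L" "A = UNIV" "B = ?below b" | a b where "a \<in> L" "b \<in> L" "A = ?above a" "B = ?below b"
      unfolding rays_above_def by auto
    then show "V \<in> order_basic_sets L r"
    proof cases
      case 1 then show ?thesis by (simp add: V order_basic_sets_def)
    next
      case (2 a)
      then have "V = {x \<in> L. (a, x) \<in> r \<and> a \<noteq> x}" by (auto simp: V)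
      then show ?thesis using 2 unfolding order_basic_sets_def by blast
    next
      case (3 b)
      then have "V = {x \<in> L. (x, b) \<in> r \<and> x \<noteq> b}" by (auto simp: V)
      then show ?thesis using 3 unfolding order_basic_sets_def by blast
    next
      case (4 a b)
      then have "V = {x \<in> L. (a, x) \<in> r \<and> a \<noteq> x \<and> (x, b) \<in> r \<and> x \<noteq> b}" by (auto simp: V)
      then show ?thesis using 4 unfolding order_basic_sets_def by blast
    qed
  qed
qed

lemma rays_above_Int:
  assumes r: "linear_order_on L r" and "A \<in> rays_above L r" "B \<in> rays_above L r"
  shows "A \<inter> B \<in> rays_above L r"
proof -
  let ?above = "\<lambda>a. {x. (a, x) \<in> r \<and> a \<noteq> x}"
  note lin = linear_order_onD[OF r]
  have nested: "?above a \<subseteq> ?above b" if "(b, a) \<in> r" for a b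
  proof
    fix x assume x: "x \<in> ?above a"
    then have "(b, x) \<in> r" using transD[OF lin(1) that] by blast
    moreover have "b \<noteq> x" using x that antisymD[OF lin(2)] by blast
    ultimately show "x \<in> ?above b" by blast
  qed
  have "?above a \<inter> ?above b \<in> rays_above L r" if "a \<in> L" "b \<in> L" for a b
  proof (cases "(b, a) \<in> r")
    case True
    then show ?thesis using nested that unfolding rays_above_def by (simp add: Int_absorb2)
  next
    case False
    then have "(a, b) \<in> r" using that lin(3,4) unfolding total_on_def refl_on_def by metis
    then show ?thesis using nested that unfolding rays_above_def by (simp add: Int_absorb1)
  qed
  with assms(2,3) show ?thesis
    unfolding rays_above_def by auto
qed

definition interval_topology :: "'b set \<Rightarrow> 'b rel \<Rightarrow> 'b topology" where
  "interval_topology L r = topology (arbitrary union_of (\<lambda>V. V \<in> order_basic_sets L r))"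

lemma order_basic_sets_Int:
  assumes "linear_order_on L r" "U \<in> order_basic_sets L r" "V \<in> order_basic_sets L r"
  shows "U \<inter> V \<in> order_basic_sets L r"
proof -
  obtain A B A' B' where "U = L \<inter> A \<inter> B" "V = L \<inter> A' \<inter> B'"
    and rays: "A \<in> rays_above L r" "A' \<in> rays_above L r" "B \<in> rays_above L (r\<inverse>)" "B' \<in> rays_above L (r\<inverse>)"
    using assms(2,3) unfolding order_basic_sets_eq by auto
  then have "U \<inter> V = L \<inter> (A \<inter> A') \<inter> (B \<inter> B')"
    by blast
  moreover have "A \<inter> A' \<in> rays_above L r" "B \<inter> B' \<in> rays_above L (r\<inverse>)"
    using rays rays_above_Int assms(1) linear_order_on_converse by blast+
  ultimately show ?thesis
    unfolding order_basic_sets_eq by blast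
qed

lemma openin_interval_topology:
  assumes "linear_order_on L r"
  shows "openin (interval_topology L r) U \<longleftrightarrow> (\<forall>x \<in> U. \<exists>V \<in> order_basic_sets L r. x \<in> V \<and> V \<subseteq> U)"
proof -
  have "istopology (arbitrary union_of (\<lambda>V. V \<in> order_basic_sets L r))"
    using order_basic_sets_Int[OF assms] by (intro istopology_base)
  then show ?thesis
    unfolding interval_topology_def by (simp add: arbitrary_union_of_alt Bex_def)
qed

lemma order_basic_sets_subset: "V \<in> order_basic_sets L r \<Longrightarrow> V \<subseteq> L"
  unfolding order_basic_sets_def by auto

lemma openin_interval_topology_subset:
  assumes "linear_order_on L r" "openin (interval_topology L r) U"
  shows "U \<subseteq> L"
  using assms order_basic_sets_subset unfolding openin_interval_topology[OF assms(1)] by blast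

lemma topspace_interval_topology:
  assumes "linear_order_on L r"
  shows "topspace (interval_topology L r) = L"
proof -
  have "L \<in> order_basic_sets L r"
    unfolding order_basic_sets_def by simp
  then have "openin (interval_topology L r) L"
    unfolding openin_interval_topology[OF assms] by blast
  then show ?thesis
    using openin_interval_topology_subset[OF assms] unfolding topspace_def by blast
qed

lemma LOTS_interval_topology:
  assumes "linear_order_on L r"
  shows "LOTS (interval_topology L r)"
  unfolding LOTS_def topspace_interval_topology[OF assms]
proof (intro exI[of _ r] conjI allI assms)
  fix U
  show "openin (interval_topology L r) U \<longleftrightarrow>
      U \<subseteq> L \<and> (\<forall>x \<in> U. \<exists>V \<in> order_basic_sets L r. x \<in> V \<and> V \<subseteq> U)"
    using openin_interval_topology_subset[OF assms, of U] openin_interval_topology[OF assms, of U] by blast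
qed

section \<open>Well-ordered sequences of refining open partitions\<close>

locale refining_partition_base =
  fixes Y :: "'b topology" and w :: "'j rel" and cell :: "'j \<Rightarrow> 'b \<Rightarrow> 'b set"
  assumes well_order: "Well_order w"
    and cell_self: "\<lbrakk>\<alpha> \<in> Field w; x \<in> topspace Y\<rbrakk> \<Longrightarrow> x \<in> cell \<alpha> x"
    and openin_cell: "\<lbrakk>\<alpha> \<in> Field w; x \<in> topspace Y\<rbrakk> \<Longrightarrow> openin Y (cell \<alpha> x)"
    and cell_eq: "\<lbrakk>\<alpha> \<in> Field w; x \<in> topspace Y; y \<in> cell \<alpha> x\<rbrakk> \<Longrightarrow> cell \<alpha> y = cell \<alpha> x"
    and cell_antimono: "\<lbrakk>(\<alpha>, \<beta>) \<in> w; x \<in> topspace Y\<rbrakk> \<Longrightarrow> cell \<beta> x \<subseteq> cell \<alpha> x"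
    and cell_base: "\<lbrakk>openin Y U; x \<in> U\<rbrakk> \<Longrightarrow> \<exists>\<alpha> \<in> Field w. cell \<alpha> x \<subseteq> U"
    and cell_separating: "\<lbrakk>x \<in> topspace Y; y \<in> topspace Y; x \<noteq> y\<rbrakk> \<Longrightarrow> \<exists>\<alpha> \<in> Field w. y \<notin> cell \<alpha> x"
begin

sublocale W: wo_rel w
  using well_order unfolding wo_rel_def .

lemma cell_subset: "\<lbrakk>\<alpha> \<in> Field w; x \<in> topspace Y\<rbrakk> \<Longrightarrow> cell \<alpha> x \<subseteq> topspace Y"
  using openin_cell openin_subset by blast

lemma cell_eq_below:
  assumes "(\<beta>, \<alpha>) \<in> w" "x \<in> topspace Y" "y \<in> topspace Y" "cell \<alpha> x = cell \<alpha> y"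
  shows "cell \<beta> x = cell \<beta> y"
proof -
  have "\<alpha> \<in> Field w" "\<beta> \<in> Field w"
    using assms(1) by (auto simp: Field_def)
  then have "y \<in> cell \<beta> x"
    using assms cell_self cell_antimono by blast
  then show ?thesis
    using cell_eq \<open>\<beta> \<in> Field w\<close> assms(2) by metis
qed

text \<open>Any linear order of the cells will do; a well-order of the whole type is a convenient one.\<close>

definition cell_order :: "'b set rel" where
  "cell_order = (SOME r. Well_order r \<and> Field r = UNIV)"

lemma linear_order_cell_order: "linear_order_on UNIV cell_order"
proof -
  have "Well_order cell_order \<and> Field cell_order = UNIV"
    unfolding cell_order_def using someI_ex[OF well_ordering] .
  then show ?thesis
    by (metis well_order_on_def)
qed

lemmas cell_order = linear_order_onD[OF linear_order_cell_order]

definition split_index :: "'b \<Rightarrow> 'b \<Rightarrow> 'j" where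
  "split_index x y = W.minim {\<alpha> \<in> Field w. cell \<alpha> x \<noteq> cell \<alpha> y}"

definition lex_less :: "'b \<Rightarrow> 'b \<Rightarrow> bool" where
  "lex_less x y \<longleftrightarrow> cell (split_index x y) x \<noteq> cell (split_index x y) y \<and>
     (cell (split_index x y) x, cell (split_index x y) y) \<in> cell_order"

lemma split_index_sym: "split_index x y = split_index y x"
  unfolding split_index_def by metis

lemma split_index_le:
  assumes "\<alpha> \<in> Field w" "cell \<alpha> x \<noteq> cell \<alpha> y"
  shows "(split_index x y, \<alpha>) \<in> w"
  unfolding split_index_def using assms by (intro W.minim_least) auto

lemma split_index_differs:
  assumes "\<alpha> \<in> Field w" "cell \<alpha> x \<noteq> cell \<alpha> y"
  shows "split_index x y \<in> Field w" "cell (split_index x y) x \<noteq> cell (split_index x y) y"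
  using W.minim_in[of "{\<alpha> \<in> Field w. cell \<alpha> x \<noteq> cell \<alpha> y}"] assms
  unfolding split_index_def by auto

lemma split_index_differs_of_neq:
  assumes "x \<in> topspace Y" "y \<in> topspace Y" "x \<noteq> y"
  shows "split_index x y \<in> Field w" "cell (split_index x y) x \<noteq> cell (split_index x y) y"
proof -
  obtain \<alpha> where "\<alpha> \<in> Field w" "y \<notin> cell \<alpha> x"
    using cell_separating[OF assms] by blast
  moreover have "y \<in> cell \<alpha> y"
    using cell_self calculation(1) assms(2) by blast
  ultimately show "split_index x y \<in> Field w" "cell (split_index x y) x \<noteq> cell (split_index x y) y"
    using split_index_differs by metis+
qed

lemma cell_eq_below_split_index:
  assumes "(\<beta>, split_index x y) \<in> w" "\<beta> \<noteq> split_index x y"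
  shows "cell \<beta> x = cell \<beta> y"
  using split_index_le[of \<beta> x y] assms W.ANTISYM unfolding antisym_def by (auto simp: Field_def)

lemma split_index_eqI:
  assumes "\<mu> \<in> Field w" "cell \<mu> x \<noteq> cell \<mu> y"
    and "\<And>\<beta>. \<lbrakk>(\<beta>, \<mu>) \<in> w; \<beta> \<noteq> \<mu>\<rbrakk> \<Longrightarrow> cell \<beta> x = cell \<beta> y"
  shows "split_index x y = \<mu>"
  using split_index_le[OF assms(1,2)] split_index_differs[OF assms(1,2)] assms(3) by blast

lemma lex_lessI:
  assumes "\<mu> \<in> Field w" "cell \<mu> x \<noteq> cell \<mu> y" "(cell \<mu> x, cell \<mu> y) \<in> cell_order"
    and "\<And>\<beta>. \<lbrakk>(\<beta>, \<mu>) \<in> w; \<beta> \<noteq> \<mu>\<rbrakk> \<Longrightarrow> cell \<beta> x = cell \<beta> y"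
  shows "lex_less x y"
  using split_index_eqI[OF assms(1,2,4)] assms(2,3) unfolding lex_less_def by simp

lemma lex_less_cell_order:
  assumes "lex_less x y" "(\<beta>, split_index x y) \<in> w"
  shows "(cell \<beta> x, cell \<beta> y) \<in> cell_order"
  using assms cell_eq_below_split_index[OF assms(2)] cell_order(4)
  unfolding lex_less_def refl_on_def by (cases "\<beta> = split_index x y") auto

lemma lex_less_irrefl: "\<not> lex_less x x"
  unfolding lex_less_def by simp

lemma lex_less_total:
  assumes "x \<in> topspace Y" "y \<in> topspace Y" "x \<noteq> y"
  shows "lex_less x y \<or> lex_less y x"
  using split_index_differs_of_neq(2)[OF assms] cell_order(3) split_index_sym[of x y]
  unfolding lex_less_def total_on_def by auto

lemma lower_of_two:
  assumes "\<mu> \<in> Field w" "\<nu> \<in> Field w"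
  obtains m where "m \<in> {\<mu>, \<nu>}" "(m, \<mu>) \<in> w" "(m, \<nu>) \<in> w"
  using W.TOTALS W.REFL assms unfolding refl_on_def by blast

lemma strictly_below_trans:
  assumes "(\<beta>, m) \<in> w" "\<beta> \<noteq> m" "(m, \<mu>) \<in> w"
  shows "(\<beta>, \<mu>) \<in> w" "\<beta> \<noteq> \<mu>"
  using assms W.TRANS W.ANTISYM unfolding trans_def antisym_def by blast+

lemma lex_less_trans:
  assumes "x \<in> topspace Y" "y \<in> topspace Y" "z \<in> topspace Y" "lex_less x y" "lex_less y z"
  shows "lex_less x z"
proof -
  let ?\<mu> = "split_index x y" and ?\<nu> = "split_index y z"
  have "x \<noteq> y" "y \<noteq> z"
    using assms(4,5) lex_less_irrefl by blast+
  then have "?\<mu> \<in> Field w" "?\<nu> \<in> Field w"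
    using split_index_differs_of_neq assms(1-3) by blast+
  then obtain m where m: "m \<in> {?\<mu>, ?\<nu>}" "(m, ?\<mu>) \<in> w" "(m, ?\<nu>) \<in> w"
    by (rule lower_of_two)
  show ?thesis
  proof (rule lex_lessI)
    show "m \<in> Field w"
      using m(1) \<open>?\<mu> \<in> Field w\<close> \<open>?\<nu> \<in> Field w\<close> by blast
    have xy: "(cell m x, cell m y) \<in> cell_order" and yz: "(cell m y, cell m z) \<in> cell_order"
      using lex_less_cell_order assms(4,5) m(2,3) by blast+
    then show "(cell m x, cell m z) \<in> cell_order"
      using transD[OF cell_order(1)] by blast
    show "cell m x \<noteq> cell m z"
    proof
      assume "cell m x = cell m z"
      then have "cell m x = cell m y" "cell m y = cell m z"
        using xy yz antisymD[OF cell_order(2)] by auto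
      then show False
        using m(1) assms(4,5) unfolding lex_less_def by auto
    qed
    fix \<beta> assume "(\<beta>, m) \<in> w" "\<beta> \<noteq> m"
    then show "cell \<beta> x = cell \<beta> z"
      using strictly_below_trans m(2,3) cell_eq_below_split_index by metis
  qed
qed

lemma cell_convex:
  assumes "\<alpha> \<in> Field w" "x \<in> topspace Y" "y1 \<in> cell \<alpha> x" "y2 \<in> cell \<alpha> x" "y \<in> topspace Y"
    and "lex_less y1 y" "lex_less y y2"
  shows "y \<in> cell \<alpha> x"
proof (rule ccontr)
  assume "y \<notin> cell \<alpha> x"
  let ?\<mu> = "split_index y1 y" and ?\<nu> = "split_index y y2"
  have Y: "y1 \<in> topspace Y" "y2 \<in> topspace Y"
    using cell_subset assms(1-4) by blast+
  have same_cell: "cell \<alpha> y1 = cell \<alpha> x" "cell \<alpha> y2 = cell \<alpha> x"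
    using cell_eq assms(1-4) by blast+
  then have "cell \<alpha> y1 \<noteq> cell \<alpha> y"
    using \<open>y \<notin> cell \<alpha> x\<close> cell_self assms(1,5) by blast
  then have \<mu>_le: "(?\<mu>, \<alpha>) \<in> w"
    using split_index_le assms(1) by blast
  have "y1 \<noteq> y" "y \<noteq> y2"
    using assms(6,7) lex_less_irrefl by blast+
  then have "?\<mu> \<in> Field w" "?\<nu> \<in> Field w"
    using split_index_differs_of_neq Y assms(5) by blast+
  then obtain m where m: "m \<in> {?\<mu>, ?\<nu>}" "(m, ?\<mu>) \<in> w" "(m, ?\<nu>) \<in> w"
    by (rule lower_of_two)
  have "(m, \<alpha>) \<in> w"
    using m(2) \<mu>_le W.TRANS unfolding trans_def by blast
  then have "cell m y1 = cell m y2"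
    using cell_eq_below Y same_cell by metis
  moreover have "(cell m y1, cell m y) \<in> cell_order" "(cell m y, cell m y2) \<in> cell_order"
    using lex_less_cell_order assms(6,7) m(2,3) by blast+
  ultimately have "cell m y1 = cell m y" "cell m y = cell m y2"
    using antisymD[OF cell_order(2)] by auto
  then show False
    using m(1) assms(6,7) unfolding lex_less_def by auto
qed

lemma split_index_cell:
  assumes "a \<in> topspace Y" "z \<in> topspace Y" "a \<noteq> z" "v \<in> cell (split_index a z) z"
  shows "split_index a v = split_index a z" "cell (split_index a z) v = cell (split_index a z) z"
proof -
  let ?\<mu> = "split_index a z"
  note \<mu> = split_index_differs_of_neq[OF assms(1-3)]
  show cell_v: "cell ?\<mu> v = cell ?\<mu> z"
    using cell_eq \<mu>(1) assms(2,4) by blast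
  show "split_index a v = ?\<mu>"
  proof (rule split_index_eqI[OF \<mu>(1)])
    show "cell ?\<mu> a \<noteq> cell ?\<mu> v"
      using \<mu>(2) cell_v by simp
    fix \<beta> assume \<beta>: "(\<beta>, ?\<mu>) \<in> w" "\<beta> \<noteq> ?\<mu>"
    then have "\<beta> \<in> Field w" "v \<in> cell \<beta> z"
      using cell_antimono assms(2,4) by (auto simp: Field_def)
    then have "cell \<beta> v = cell \<beta> z"
      using cell_eq assms(2) by blast
    then show "cell \<beta> a = cell \<beta> v"
      using cell_eq_below_split_index[OF \<beta>] by simp
  qed
qed

lemma lex_less_cell_iff:
  assumes "a \<in> topspace Y" "z \<in> topspace Y" "a \<noteq> z" "v \<in> cell (split_index a z) z"
  shows "lex_less a v \<longleftrightarrow> lex_less a z" "lex_less v a \<longleftrightarrow> lex_less z a"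
  using split_index_cell[OF assms] split_index_sym[of v a] split_index_sym[of z a]
  unfolding lex_less_def by simp_all

lemma openin_lex_less_above: "a \<in> topspace Y \<Longrightarrow> openin Y {z \<in> topspace Y. lex_less a z}"
proof (subst openin_subopen, intro ballI)
  fix z assume a: "a \<in> topspace Y" and "z \<in> {z \<in> topspace Y. lex_less a z}"
  then have z: "z \<in> topspace Y" "lex_less a z" "a \<noteq> z"
    using lex_less_irrefl by auto
  let ?C = "cell (split_index a z) z"
  have "openin Y ?C" "z \<in> ?C" "?C \<subseteq> topspace Y"
    using openin_cell cell_self cell_subset split_index_differs_of_neq(1)[OF a z(1,3)] z(1) by auto
  moreover have "?C \<subseteq> {z \<in> topspace Y. lex_less a z}"
    using lex_less_cell_iff(1)[OF a z(1,3)] z(2) calculation(3) by blast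
  ultimately show "\<exists>T. openin Y T \<and> z \<in> T \<and> T \<subseteq> {z \<in> topspace Y. lex_less a z}"
    by blast
qed

lemma openin_lex_less_below: "a \<in> topspace Y \<Longrightarrow> openin Y {z \<in> topspace Y. lex_less z a}"
proof (subst openin_subopen, intro ballI)
  fix z assume a: "a \<in> topspace Y" and "z \<in> {z \<in> topspace Y. lex_less z a}"
  then have z: "z \<in> topspace Y" "lex_less z a" "a \<noteq> z"
    using lex_less_irrefl by auto
  let ?C = "cell (split_index a z) z"
  have "openin Y ?C" "z \<in> ?C" "?C \<subseteq> topspace Y"
    using openin_cell cell_self cell_subset split_index_differs_of_neq(1)[OF a z(1,3)] z(1) by auto
  moreover have "?C \<subseteq> {z \<in> topspace Y. lex_less z a}"
    using lex_less_cell_iff(2)[OF a z(1,3)] z(2) calculation(3) by blast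
  ultimately show "\<exists>T. openin Y T \<and> z \<in> T \<and> T \<subseteq> {z \<in> topspace Y. lex_less z a}"
    by blast
qed

lemma openin_closed_ray_above:
  assumes "\<alpha> \<in> Field w" "x \<in> topspace Y" "\<forall>y \<in> cell \<alpha> x. \<not> lex_less y x"
  shows "openin Y {z \<in> topspace Y. z = x \<or> lex_less x z}"
proof -
  have "{z \<in> topspace Y. z = x \<or> lex_less x z} = cell \<alpha> x \<union> {z \<in> topspace Y. lex_less x z}"
    using assms cell_self cell_subset lex_less_total by blast
  then show ?thesis
    using openin_cell openin_lex_less_above assms(1,2) by auto
qed

lemma openin_closed_ray_below:
  assumes "\<alpha> \<in> Field w" "x \<in> topspace Y" "\<forall>y \<in> cell \<alpha> x. \<not> lex_less x y"
  shows "openin Y {z \<in> topspace Y. z = x \<or> lex_less z x}"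
proof -
  have "{z \<in> topspace Y. z = x \<or> lex_less z x} = cell \<alpha> x \<union> {z \<in> topspace Y. lex_less z x}"
    using assms cell_self cell_subset lex_less_total by blast
  then show ?thesis
    using openin_cell openin_lex_less_below assms(1,2) by auto
qed

text \<open>
  Points of \<open>Y\<close> are encoded as \<open>(y, 0)\<close>. If \<open>[y, \<rightarrow>)\<close> is open, \<open>(y, -1)\<close> is inserted
  directly below \<open>(y, 0)\<close>, so that the open ray above \<open>(y, -1)\<close> traces exactly \<open>[y, \<rightarrow>)\<close>
  on \<open>Y\<close>; dually for \<open>(y, 1)\<close>.
\<close>

definition lots_carrier :: "('b \<times> int) set" where
  "lots_carrier = {(y, k). y \<in> topspace Y \<and>
     (k = 0 \<or> k = -1 \<and> openin Y {z \<in> topspace Y. z = y \<or> lex_less y z}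
            \<or> k = 1 \<and> openin Y {z \<in> topspace Y. z = y \<or> lex_less z y})}"

definition pair_less :: "'b \<times> int \<Rightarrow> 'b \<times> int \<Rightarrow> bool" where
  "pair_less p q \<longleftrightarrow> lex_less (fst p) (fst q) \<or> fst p = fst q \<and> snd p < snd q"

definition lots_order :: "('b \<times> int) rel" where
  "lots_order = {(p, q). p \<in> lots_carrier \<and> q \<in> lots_carrier \<and> (pair_less p q \<or> p = q)}"

lemma fst_lots_carrier: "p \<in> lots_carrier \<Longrightarrow> fst p \<in> topspace Y"
  unfolding lots_carrier_def by auto

lemma zero_lots_carrier: "y \<in> topspace Y \<Longrightarrow> (y, 0) \<in> lots_carrier"
  unfolding lots_carrier_def by simp

lemma pair_less_irrefl: "\<not> pair_less p p"
  unfolding pair_less_def using lex_less_irrefl by auto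

lemma pair_less_trans:
  assumes "p \<in> lots_carrier" "q \<in> lots_carrier" "s \<in> lots_carrier" "pair_less p q" "pair_less q s"
  shows "pair_less p s"
proof -
  have "fst p \<in> topspace Y" "fst q \<in> topspace Y" "fst s \<in> topspace Y"
    using assms(1-3) fst_lots_carrier by blast+
  from lex_less_trans[OF this] show ?thesis
    using assms(4,5) unfolding pair_less_def by auto
qed

lemma pair_less_total:
  assumes "p \<in> lots_carrier" "q \<in> lots_carrier" "p \<noteq> q"
  shows "pair_less p q \<or> pair_less q p"
proof (cases "fst p = fst q")
  case True
  then have "snd p \<noteq> snd q"
    using assms(3) prod_eq_iff by blast
  then show ?thesis
    using True unfolding pair_less_def by auto
next
  case False
  then show ?thesis
    using lex_less_total fst_lots_carrier assms(1,2) unfolding pair_less_def by blast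
qed

lemma linear_order_lots_order: "linear_order_on lots_carrier lots_order"
  unfolding linear_order_on_def partial_order_on_def preorder_on_def
proof (intro conjI)
  show "lots_order \<subseteq> lots_carrier \<times> lots_carrier" "refl_on lots_carrier lots_order"
    unfolding lots_order_def refl_on_def using pair_less_irrefl by auto
  show "trans lots_order"
    unfolding lots_order_def trans_def using pair_less_trans by blast
  show "antisym lots_order"
    unfolding lots_order_def antisym_def using pair_less_trans pair_less_irrefl by blast
  show "total_on lots_carrier lots_order"
    unfolding lots_order_def total_on_def using pair_less_total by blast
qed

lemma lots_order_strict_iff:
  "(p, q) \<in> lots_order \<and> p \<noteq> q \<longleftrightarrow> p \<in> lots_carrier \<and> q \<in> lots_carrier \<and> pair_less p q"
  unfolding lots_order_def using pair_less_irrefl by blast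

lemma openin_preimage_ray_above:
  assumes "q \<in> lots_carrier"
  shows "openin Y {y \<in> topspace Y. pair_less q (y, 0)}"
proof -
  obtain a i where q: "q = (a, i)" by fastforce
  have a: "a \<in> topspace Y"
    using assms q fst_lots_carrier by force
  show ?thesis
  proof (cases "i < 0")
    case True
    then have "{y \<in> topspace Y. pair_less q (y, 0)} = {z \<in> topspace Y. z = a \<or> lex_less a z}"
      unfolding q pair_less_def by auto
    moreover have "openin Y {z \<in> topspace Y. z = a \<or> lex_less a z}"
      using assms True unfolding q lots_carrier_def by auto
    ultimately show ?thesis by simp
  next
    case False
    then have "{y \<in> topspace Y. pair_less q (y, 0)} = {z \<in> topspace Y. lex_less a z}"
      unfolding q pair_less_def by auto
    then show ?thesis
      using openin_lex_less_above[OF a] by simp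
  qed
qed

lemma openin_preimage_ray_below:
  assumes "q \<in> lots_carrier"
  shows "openin Y {y \<in> topspace Y. pair_less (y, 0) q}"
proof -
  obtain a i where q: "q = (a, i)" by fastforce
  have a: "a \<in> topspace Y"
    using assms q fst_lots_carrier by force
  show ?thesis
  proof (cases "0 < i")
    case True
    then have "{y \<in> topspace Y. pair_less (y, 0) q} = {z \<in> topspace Y. z = a \<or> lex_less z a}"
      unfolding q pair_less_def by auto
    moreover have "openin Y {z \<in> topspace Y. z = a \<or> lex_less z a}"
      using assms True unfolding q lots_carrier_def by auto
    ultimately show ?thesis by simp
  next
    case False
    then have "{y \<in> topspace Y. pair_less (y, 0) q} = {z \<in> topspace Y. lex_less z a}"
      unfolding q pair_less_def by auto
    then show ?thesis
      using openin_lex_less_below[OF a] by simp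
  qed
qed

lemma openin_preimage_order_basic_set:
  assumes "V \<in> order_basic_sets lots_carrier lots_order"
  shows "openin Y {y \<in> topspace Y. (y, 0) \<in> V}"
proof -
  obtain A B where V: "V = lots_carrier \<inter> A \<inter> B"
    and A: "A \<in> rays_above lots_carrier lots_order" and B: "B \<in> rays_above lots_carrier (lots_order\<inverse>)"
    using assms unfolding order_basic_sets_eq by blast
  have "openin Y {y \<in> topspace Y. (y, 0) \<in> A}"
  proof -
    consider "A = UNIV" | q where "q \<in> lots_carrier" "A = {x. (q, x) \<in> lots_order \<and> q \<noteq> x}"
      using A unfolding rays_above_def by blast
    then show ?thesis
    proof cases
      case (2 q)
      then have "{y \<in> topspace Y. (y, 0) \<in> A} = {y \<in> topspace Y. pair_less q (y, 0)}"
        using lots_order_strict_iff zero_lots_carrier by blast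
      then show ?thesis
        using openin_preimage_ray_above[OF 2(1)] by simp
    qed simp
  qed
  moreover have "openin Y {y \<in> topspace Y. (y, 0) \<in> B}"
  proof -
    consider "B = UNIV" | q where "q \<in> lots_carrier" "B = {x. (x, q) \<in> lots_order \<and> x \<noteq> q}"
      using B unfolding rays_above_def by auto
    then show ?thesis
    proof cases
      case (2 q)
      then have "{y \<in> topspace Y. (y, 0) \<in> B} = {y \<in> topspace Y. pair_less (y, 0) q}"
        using lots_order_strict_iff zero_lots_carrier by blast
      then show ?thesis
        using openin_preimage_ray_below[OF 2(1)] by simp
    qed simp
  qed
  moreover have "{y \<in> topspace Y. (y, 0) \<in> V} = {y \<in> topspace Y. (y, 0) \<in> A} \<inter> {y \<in> topspace Y. (y, 0) \<in> B}"
    using V zero_lots_carrier by auto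
  ultimately show ?thesis
    by auto
qed

lemma lots_interval_within_cell:
  assumes "\<alpha> \<in> Field w" "x \<in> topspace Y"
  obtains p q where "p \<in> lots_carrier" "q \<in> lots_carrier" "pair_less p (x, 0)" "pair_less (x, 0) q"
    "\<And>y. \<lbrakk>y \<in> topspace Y; pair_less p (y, 0); pair_less (y, 0) q\<rbrakk> \<Longrightarrow> y \<in> cell \<alpha> x"
proof -
  have x: "x \<in> cell \<alpha> x"
    using cell_self assms by blast
  obtain p where p: "p \<in> lots_carrier" "pair_less p (x, 0)"
    "\<And>y. pair_less p (y, 0) \<Longrightarrow> \<exists>l \<in> cell \<alpha> x. l = y \<or> lex_less l y"
  proof (cases "\<exists>l \<in> cell \<alpha> x. lex_less l x")
    case True
    then obtain l where "l \<in> cell \<alpha> x" "lex_less l x" by blast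
    moreover have "l \<in> topspace Y"
      using cell_subset assms calculation(1) by blast
    ultimately show ?thesis
      using that[of "(l, 0)"] zero_lots_carrier unfolding pair_less_def by auto
  next
    case False
    then have "(x, -1) \<in> lots_carrier"
      using openin_closed_ray_above assms unfolding lots_carrier_def by auto
    then show ?thesis
      using that[of "(x, -1)"] x unfolding pair_less_def by auto
  qed
  obtain q where q: "q \<in> lots_carrier" "pair_less (x, 0) q"
    "\<And>y. pair_less (y, 0) q \<Longrightarrow> \<exists>u \<in> cell \<alpha> x. u = y \<or> lex_less y u"
  proof (cases "\<exists>u \<in> cell \<alpha> x. lex_less x u")
    case True
    then obtain u where "u \<in> cell \<alpha> x" "lex_less x u" by blast
    moreover have "u \<in> topspace Y"
      using cell_subset assms calculation(1) by blast
    ultimately show ?thesis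
      using that[of "(u, 0)"] zero_lots_carrier unfolding pair_less_def by auto
  next
    case False
    then have "(x, 1) \<in> lots_carrier"
      using openin_closed_ray_below assms unfolding lots_carrier_def by auto
    then show ?thesis
      using that[of "(x, 1)"] x unfolding pair_less_def by auto
  qed
  show ?thesis
  proof (rule that[OF p(1) q(1) p(2) q(2)])
    fix y assume "y \<in> topspace Y" "pair_less p (y, 0)" "pair_less (y, 0) q"
    then show "y \<in> cell \<alpha> x"
      using p(3) q(3) cell_convex[OF assms] by blast
  qed
qed

lemma continuous_map_zero_section:
  "continuous_map Y (interval_topology lots_carrier lots_order) (\<lambda>y. (y, 0))"
  unfolding continuous_map
proof (intro conjI allI impI)
  show "(\<lambda>y. (y, 0)) ` topspace Y \<subseteq> topspace (interval_topology lots_carrier lots_order)"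
    using zero_lots_carrier topspace_interval_topology[OF linear_order_lots_order] by auto
  fix U assume "openin (interval_topology lots_carrier lots_order) U"
  then have U: "\<forall>p \<in> U. \<exists>V \<in> order_basic_sets lots_carrier lots_order. p \<in> V \<and> V \<subseteq> U"
    using openin_interval_topology[OF linear_order_lots_order] by blast
  show "openin Y {y \<in> topspace Y. (y, 0) \<in> U}"
  proof (subst openin_subopen, intro ballI)
    fix y assume "y \<in> {y \<in> topspace Y. (y, 0) \<in> U}"
    then obtain V where "V \<in> order_basic_sets lots_carrier lots_order" "(y, 0) \<in> V" "V \<subseteq> U" "y \<in> topspace Y"
      using U by blast
    then show "\<exists>T. openin Y T \<and> y \<in> T \<and> T \<subseteq> {y \<in> topspace Y. (y, 0) \<in> U}"
      using openin_preimage_order_basic_set by (intro exI[of _ "{y \<in> topspace Y. (y, 0) \<in> V}"]) auto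
  qed
qed

lemma open_map_zero_section:
  "open_map Y (subtopology (interval_topology lots_carrier lots_order) ((\<lambda>y. (y, 0)) ` topspace Y)) (\<lambda>y. (y, 0))"
  unfolding open_map_def openin_subtopology
proof (intro allI impI)
  let ?S = "(\<lambda>y. (y, 0::int)) ` topspace Y"
  fix U assume U: "openin Y U"
  define U' where "U' = \<Union>{V \<in> order_basic_sets lots_carrier lots_order. V \<inter> ?S \<subseteq> (\<lambda>y. (y, 0)) ` U}"
  have "openin (interval_topology lots_carrier lots_order) U'"
    unfolding openin_interval_topology[OF linear_order_lots_order] U'_def by blast
  moreover have "(\<lambda>y. (y, 0)) ` U \<subseteq> U'"
  proof
    fix p :: "'b \<times> int" assume "p \<in> (\<lambda>y. (y, 0)) ` U"
    then obtain x where x: "x \<in> U" "p = (x, 0)" by blast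
    obtain \<alpha> where \<alpha>: "\<alpha> \<in> Field w" "cell \<alpha> x \<subseteq> U"
      using cell_base[OF U x(1)] by blast
    have "x \<in> topspace Y"
      using U x(1) openin_subset by blast
    then obtain a b where ab: "a \<in> lots_carrier" "b \<in> lots_carrier" "pair_less a (x, 0)" "pair_less (x, 0) b"
      and between: "\<And>y. \<lbrakk>y \<in> topspace Y; pair_less a (y, 0); pair_less (y, 0) b\<rbrakk> \<Longrightarrow> y \<in> cell \<alpha> x"
      using lots_interval_within_cell \<alpha>(1) by metis
    define V where "V = {v \<in> lots_carrier. (a, v) \<in> lots_order \<and> a \<noteq> v \<and> (v, b) \<in> lots_order \<and> v \<noteq> b}"
    have "V \<in> order_basic_sets lots_carrier lots_order"
      unfolding V_def order_basic_sets_def using ab(1,2) by blast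
    moreover have "p \<in> V"
      unfolding V_def x(2) using ab lots_order_strict_iff zero_lots_carrier \<open>x \<in> topspace Y\<close> by blast
    moreover have "V \<inter> ?S \<subseteq> (\<lambda>y. (y, 0)) ` U"
      using between \<alpha>(2) lots_order_strict_iff unfolding V_def by blast
    ultimately show "p \<in> U'"
      unfolding U'_def by blast
  qed
  moreover have "U \<subseteq> topspace Y"
    using U openin_subset by blast
  ultimately have "(\<lambda>y. (y, 0)) ` U = U' \<inter> ?S"
    unfolding U'_def by blast
  then show "\<exists>T. openin (interval_topology lots_carrier lots_order) T \<and> (\<lambda>y. (y, 0)) ` U = T \<inter> ?S"
    using \<open>openin (interval_topology lots_carrier lots_order) U'\<close> by blast
qed

theorem GO_space: "GO_space Y"
proof -
  let ?L = "interval_topology lots_carrier lots_order" and ?S = "(\<lambda>y. (y, 0::int)) ` topspace Y"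
  have S: "?S \<subseteq> topspace ?L"
    using zero_lots_carrier topspace_interval_topology[OF linear_order_lots_order] by auto
  have "homeomorphic_map Y (subtopology ?L ?S) (\<lambda>y. (y, 0))"
  proof (rule bijective_open_imp_homeomorphic_map)
    show "continuous_map Y (subtopology ?L ?S) (\<lambda>y. (y, 0))"
      using continuous_map_zero_section by (rule continuous_map_into_subtopology) auto
    show "(\<lambda>y. (y, 0)) ` topspace Y = topspace (subtopology ?L ?S)"
      using S by auto
  qed (use open_map_zero_section inj_on_def in auto)
  then show ?thesis
    unfolding GO_space_def
    using LOTS_interval_topology[OF linear_order_lots_order] S homeomorphic_map_imp_homeomorphic_space by blast
qed

end

section \<open>Finite powers and the construction from a discrete clopen base\<close>

lemma (in wo_rel) finite_has_upper_bound:
  assumes "finite A" "A \<subseteq> Field r" "Field r \<noteq> {}"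
  shows "\<exists>m \<in> Field r. \<forall>a \<in> A. (a, m) \<in> r"
  using assms(1,2)
proof (induction A rule: finite_induct)
  case (insert a A)
  then obtain m where m: "m \<in> Field r" "\<forall>b \<in> A. (b, m) \<in> r"
    by blast
  have a: "a \<in> Field r"
    using insert.prems by blast
  then have "max2 a m \<in> Field r" "(a, max2 a m) \<in> r" "(m, max2 a m) \<in> r"
    using max2_among[OF a m(1)] max2_greater[OF a m(1)] m(1) by auto
  then show ?case
    using m(2) TRANS unfolding trans_def by blast
qed (use assms(3) in blast)

lemma refining_partition_base_product:
  assumes "refining_partition_base X w cell" "finite K" "Field w \<noteq> {}"
  shows "refining_partition_base (product_topology (\<lambda>_. X) K) w (\<lambda>\<alpha> f. PiE K (\<lambda>i. cell \<alpha> (f i)))"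
proof -
  interpret X: refining_partition_base X w cell
    by (fact assms(1))
  show ?thesis
  proof unfold_locales
    fix \<alpha> f assume \<alpha>: "\<alpha> \<in> Field w" and f: "f \<in> topspace (product_topology (\<lambda>_. X) K)"
    then have fX: "\<And>i. i \<in> K \<Longrightarrow> f i \<in> topspace X"
      by auto
    show "f \<in> PiE K (\<lambda>i. cell \<alpha> (f i))"
      using f X.cell_self[OF \<alpha> fX] by auto
    show "openin (product_topology (\<lambda>_. X) K) (PiE K (\<lambda>i. cell \<alpha> (f i)))"
      using X.openin_cell[OF \<alpha> fX] by (simp add: openin_PiE assms(2))
    fix g assume "g \<in> PiE K (\<lambda>i. cell \<alpha> (f i))"
    then show "PiE K (\<lambda>i. cell \<alpha> (g i)) = PiE K (\<lambda>i. cell \<alpha> (f i))"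
      using X.cell_eq[OF \<alpha> fX] by (intro PiE_cong) auto
  next
    fix \<alpha> \<beta> f assume "(\<alpha>, \<beta>) \<in> w" "f \<in> topspace (product_topology (\<lambda>_. X) K)"
    moreover have "\<And>i. i \<in> K \<Longrightarrow> f i \<in> topspace X"
      using calculation(2) by auto
    ultimately have "\<And>i. i \<in> K \<Longrightarrow> cell \<beta> (f i) \<subseteq> cell \<alpha> (f i)"
      using X.cell_antimono by blast
    then show "PiE K (\<lambda>i. cell \<beta> (f i)) \<subseteq> PiE K (\<lambda>i. cell \<alpha> (f i))"
      by (rule PiE_mono)
  next
    fix U f assume "openin (product_topology (\<lambda>_. X) K) U" "f \<in> U"
    then have "\<exists>V. (\<forall>i \<in> K. openin X (V i)) \<and> f \<in> PiE K V \<and> PiE K V \<subseteq> U"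
      unfolding openin_product_topology_alt by blast
    then obtain V where V: "\<forall>i \<in> K. openin X (V i)" "f \<in> PiE K V" "PiE K V \<subseteq> U"
      by blast
    then have fV: "\<And>i. i \<in> K \<Longrightarrow> f i \<in> V i" and fX: "\<And>i. i \<in> K \<Longrightarrow> f i \<in> topspace X"
      using openin_subset by (blast dest: PiE_mem)+
    have "\<forall>i \<in> K. \<exists>\<alpha>. \<alpha> \<in> Field w \<and> cell \<alpha> (f i) \<subseteq> V i"
      using X.cell_base V(1) fV by blast
    then have "\<exists>\<alpha>. \<forall>i \<in> K. \<alpha> i \<in> Field w \<and> cell (\<alpha> i) (f i) \<subseteq> V i"
      by (rule bchoice)
    then obtain \<alpha> where \<alpha>: "\<forall>i \<in> K. \<alpha> i \<in> Field w \<and> cell (\<alpha> i) (f i) \<subseteq> V i"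
      by blast
    then have "finite (\<alpha> ` K)" "\<alpha> ` K \<subseteq> Field w"
      using assms(2) by auto
    then obtain m where m: "m \<in> Field w" "\<forall>a \<in> \<alpha> ` K. (a, m) \<in> w"
      using X.W.finite_has_upper_bound assms(3) by blast
    have "cell m (f i) \<subseteq> V i" if "i \<in> K" for i
    proof -
      have "cell m (f i) \<subseteq> cell (\<alpha> i) (f i)"
        using X.cell_antimono m(2) fX that by blast
      then show ?thesis
        using \<alpha> that by blast
    qed
    then have "PiE K (\<lambda>i. cell m (f i)) \<subseteq> PiE K V"
      by (rule PiE_mono)
    then show "\<exists>\<alpha> \<in> Field w. PiE K (\<lambda>i. cell \<alpha> (f i)) \<subseteq> U"
      using m(1) V(3) by blast
  next
    fix f g assume f: "f \<in> topspace (product_topology (\<lambda>_. X) K)"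
      and g: "g \<in> topspace (product_topology (\<lambda>_. X) K)" and "f \<noteq> g"
    then obtain i where i: "i \<in> K" "f i \<noteq> g i"
      using PiE_ext[of f K "\<lambda>_. topspace X" g] f g by auto
    moreover have "f i \<in> topspace X" "g i \<in> topspace X"
      using f g i(1) by auto
    ultimately obtain \<alpha> where "\<alpha> \<in> Field w" "g i \<notin> cell \<alpha> (f i)"
      using X.cell_separating by blast
    then show "\<exists>\<alpha> \<in> Field w. g \<notin> PiE K (\<lambda>i. cell \<alpha> (f i))"
      using i(1) by blast
  qed (fact X.well_order)
qed

lemma refining_partition_base_discrete:
  assumes "discrete_space X"
  shows "refining_partition_base X (card_of (UNIV :: unit set)) (\<lambda>_ x. {x})"
proof unfold_locales
  show "Well_order (card_of (UNIV :: unit set))"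
    by (rule card_of_Well_order)
  show "openin X {x}" if "x \<in> topspace X" for x
    using assms that unfolding discrete_space_def by blast
  show "\<exists>\<alpha> \<in> Field (card_of (UNIV :: unit set)). {x} \<subseteq> U" if "x \<in> U" for U x
    using that by (simp add: Field_card_of)
  show "\<exists>\<alpha> \<in> Field (card_of (UNIV :: unit set)). y \<notin> {x}" if "x \<noteq> y" for x y
    using that by (simp add: Field_card_of)
qed simp_all

lemma discrete_familyD:
  assumes "discrete_family X \<A>" "x \<in> topspace X"
  obtains U where "openin X U" "x \<in> U" "\<forall>A \<in> \<A>. \<forall>B \<in> \<A>. A \<inter> U \<noteq> {} \<and> B \<inter> U \<noteq> {} \<longrightarrow> A = B"
proof -
  have "\<exists>U. openin X U \<and> x \<in> U \<and> (\<forall>A \<in> \<A>. \<forall>B \<in> \<A>. A \<inter> U \<noteq> {} \<and> B \<inter> U \<noteq> {} \<longrightarrow> A = B)"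
    using assms unfolding discrete_family_def by (rule bspec)
  then show ?thesis
    using that by blast
qed

lemma discrete_family_disjoint:
  assumes "discrete_family X \<A>" "A \<in> \<A>" "B \<in> \<A>" "x \<in> A" "x \<in> B" "x \<in> topspace X"
  shows "A = B"
proof -
  obtain U where "x \<in> U" and at_most_one: "\<forall>A \<in> \<A>. \<forall>B \<in> \<A>. A \<inter> U \<noteq> {} \<and> B \<inter> U \<noteq> {} \<longrightarrow> A = B"
    using discrete_familyD[OF assms(1,6)] by metis
  moreover have "A \<inter> U \<noteq> {}" "B \<inter> U \<noteq> {}"
    using assms(4,5) calculation(1) by blast+
  ultimately show ?thesis
    using assms(2,3) by blast
qed

lemma discrete_family_imp_locally_finite_in:
  assumes "discrete_family X \<A>" "\<Union>\<A> \<subseteq> topspace X"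
  shows "locally_finite_in X \<A>"
  unfolding locally_finite_in_def
proof (intro conjI ballI assms(2))
  fix x assume "x \<in> topspace X"
  then obtain U where U: "openin X U" "x \<in> U"
    and at_most_one: "\<forall>A \<in> \<A>. \<forall>B \<in> \<A>. A \<inter> U \<noteq> {} \<and> B \<inter> U \<noteq> {} \<longrightarrow> A = B"
    using discrete_familyD[OF assms(1)] by metis
  have "finite {A \<in> \<A>. A \<inter> U \<noteq> {}}"
  proof (cases "{A \<in> \<A>. A \<inter> U \<noteq> {}} = {}")
    case False
    then obtain A where A: "A \<in> \<A>" "A \<inter> U \<noteq> {}"
      by blast
    have "B = A" if "B \<in> \<A>" "B \<inter> U \<noteq> {}" for B
      using at_most_one A that by blast
    then have "{A \<in> \<A>. A \<inter> U \<noteq> {}} \<subseteq> {A}"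
      by blast
    then show ?thesis
      by (rule finite_subset) simp
  next
    case True
    then show ?thesis
      by (simp only: finite.emptyI)
  qed
  then show "\<exists>U. openin X U \<and> x \<in> U \<and> finite {A \<in> \<A>. A \<inter> U \<noteq> {}}"
    using U by blast
qed

text \<open>The cell containing \<open>x\<close> of the partition of \<open>X\<close> into the members of \<open>\<A>\<close> and the
  complement of their union (for a discrete family the members are pairwise disjoint).\<close>

definition family_cell :: "'a topology \<Rightarrow> 'a set set \<Rightarrow> 'a \<Rightarrow> 'a set" where
  "family_cell X \<A> x = (if \<exists>A \<in> \<A>. x \<in> A then (SOME A. A \<in> \<A> \<and> x \<in> A) else topspace X - \<Union>\<A>)"

context
  fixes X :: "'a topology" and \<A> :: "'a set set"
  assumes discrete: "discrete_family X \<A>"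
    and clopen: "\<And>A. A \<in> \<A> \<Longrightarrow> openin X A \<and> closedin X A"
begin

lemma family_cell_member:
  assumes "A \<in> \<A>" "x \<in> A"
  shows "family_cell X \<A> x = A"
proof -
  let ?B = "SOME A. A \<in> \<A> \<and> x \<in> A"
  have B: "?B \<in> \<A>" "x \<in> ?B"
    using someI[of "\<lambda>A. A \<in> \<A> \<and> x \<in> A"] assms by blast+
  have "x \<in> topspace X"
    using assms clopen openin_subset by blast
  then have "?B = A"
    using discrete_family_disjoint[OF discrete B(1) assms(1) B(2) assms(2)] by blast
  moreover have "\<exists>A \<in> \<A>. x \<in> A"
    using assms by blast
  ultimately show ?thesis
    unfolding family_cell_def by simp
qed

lemma openin_complement_Union: "openin X (topspace X - \<Union>\<A>)"
proof -
  have "\<Union>\<A> \<subseteq> topspace X"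
    using clopen openin_subset by blast
  then have "locally_finite_in X \<A>"
    by (rule discrete_family_imp_locally_finite_in[OF discrete])
  then have "closedin X (\<Union>\<A>)"
    using clopen by (intro closedin_locally_finite_Union) auto
  then show ?thesis
    by (simp add: closedin_def)
qed

lemma openin_family_cell: "openin X (family_cell X \<A> x)"
proof (cases "\<exists>A \<in> \<A>. x \<in> A")
  case True
  then obtain A where "A \<in> \<A>" "x \<in> A"
    by blast
  then show ?thesis
    using family_cell_member clopen by simp
next
  case False
  then show ?thesis
    using openin_complement_Union unfolding family_cell_def by simp
qed

lemma family_cell_self:
  assumes "x \<in> topspace X"
  shows "x \<in> family_cell X \<A> x"
proof (cases "\<exists>A \<in> \<A>. x \<in> A")
  case True
  then show ?thesis
    using family_cell_member by blast
next
  case False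
  then show ?thesis
    using assms unfolding family_cell_def by simp
qed

lemma family_cell_eq:
  assumes "y \<in> family_cell X \<A> x"
  shows "family_cell X \<A> y = family_cell X \<A> x"
proof (cases "\<exists>A \<in> \<A>. x \<in> A")
  case True
  then obtain A where A: "A \<in> \<A>" "x \<in> A" by blast
  then have "family_cell X \<A> x = A"
    by (rule family_cell_member)
  moreover have "family_cell X \<A> y = A"
    using A(1) assms calculation by (intro family_cell_member) auto
  ultimately show ?thesis
    by simp
next
  case False
  then have "family_cell X \<A> x = topspace X - \<Union>\<A>"
    unfolding family_cell_def by simp
  moreover have "\<not> (\<exists>A \<in> \<A>. y \<in> A)"
    using assms calculation by blast
  ultimately show ?thesis
    unfolding family_cell_def by simp
qed

end

lemma refining_partition_base_cumulative:
  fixes part :: "'j \<Rightarrow> 'a \<Rightarrow> 'a set"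
  assumes w: "Well_order w" and "t1_space X"
    and part_self: "\<And>\<beta> x. \<lbrakk>\<beta> \<in> Field w; x \<in> topspace X\<rbrakk> \<Longrightarrow> x \<in> part \<beta> x"
    and part_eq: "\<And>\<beta> x y. \<lbrakk>\<beta> \<in> Field w; y \<in> part \<beta> x\<rbrakk> \<Longrightarrow> part \<beta> y = part \<beta> x"
    and openin_cumulative: "\<And>\<alpha> x. \<lbrakk>\<alpha> \<in> Field w; x \<in> topspace X\<rbrakk>
      \<Longrightarrow> openin X (topspace X \<inter> (\<Inter>\<beta> \<in> under w \<alpha>. part \<beta> x))"
    and part_base: "\<And>U x. \<lbrakk>openin X U; x \<in> U\<rbrakk> \<Longrightarrow> \<exists>\<beta> \<in> Field w. part \<beta> x \<subseteq> U"
  shows "refining_partition_base X w (\<lambda>\<alpha> x. topspace X \<inter> (\<Inter>\<beta> \<in> under w \<alpha>. part \<beta> x))"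
proof unfold_locales
  interpret W: wo_rel w
    using w unfolding wo_rel_def .
  show "Well_order w"
    by (fact w)
  show "openin X (topspace X \<inter> (\<Inter>\<beta> \<in> under w \<alpha>. part \<beta> x))" if "\<alpha> \<in> Field w" "x \<in> topspace X" for \<alpha> x
    using openin_cumulative that .
  show "x \<in> topspace X \<inter> (\<Inter>\<beta> \<in> under w \<alpha>. part \<beta> x)" if x: "x \<in> topspace X" for \<alpha> x
  proof -
    have "x \<in> part \<beta> x" if "\<beta> \<in> under w \<alpha>" for \<beta>
      using part_self[OF subsetD[OF under_Field that] x] .
    then show ?thesis
      using x by simp
  qed
  show "topspace X \<inter> (\<Inter>\<beta> \<in> under w \<alpha>. part \<beta> y) = topspace X \<inter> (\<Inter>\<beta> \<in> under w \<alpha>. part \<beta> x)"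
    if y: "y \<in> topspace X \<inter> (\<Inter>\<beta> \<in> under w \<alpha>. part \<beta> x)" for \<alpha> x y
  proof -
    have "part \<beta> y = part \<beta> x" if "\<beta> \<in> under w \<alpha>" for \<beta>
    proof (rule part_eq)
      show "\<beta> \<in> Field w"
        using under_Field that by fast
      show "y \<in> part \<beta> x"
        using y that by simp
    qed
    then have "(\<Inter>\<beta> \<in> under w \<alpha>. part \<beta> y) = (\<Inter>\<beta> \<in> under w \<alpha>. part \<beta> x)"
      by (rule INF_cong[OF refl])
    then show ?thesis
      by simp
  qed
  show "topspace X \<inter> (\<Inter>\<beta> \<in> under w \<beta>'. part \<beta> x) \<subseteq> topspace X \<inter> (\<Inter>\<beta> \<in> under w \<alpha>. part \<beta> x)"
    if "(\<alpha>, \<beta>') \<in> w" for \<alpha> \<beta>' x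
  proof -
    have "under w \<alpha> \<subseteq> under w \<beta>'"
      by (rule under_incr[OF W.TRANS that])
    then show ?thesis
      by (intro Int_mono subset_refl INT_anti_mono)
  qed
  show base: "\<exists>\<alpha> \<in> Field w. topspace X \<inter> (\<Inter>\<beta> \<in> under w \<alpha>. part \<beta> x) \<subseteq> U"
    if U: "openin X U" "x \<in> U" for U x
  proof -
    obtain \<beta> where \<beta>: "\<beta> \<in> Field w" "part \<beta> x \<subseteq> U"
      using part_base[OF U] by blast
    have "(\<Inter>\<gamma> \<in> under w \<beta>. part \<gamma> x) \<subseteq> part \<beta> x"
      by (rule INT_lower[OF Refl_under_in[OF W.REFL \<beta>(1)]])
    then have "topspace X \<inter> (\<Inter>\<gamma> \<in> under w \<beta>. part \<gamma> x) \<subseteq> U"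
      by (rule le_infI2[OF subset_trans[OF _ \<beta>(2)]])
    then show ?thesis
      using \<beta>(1) by (rule bexI)
  qed
  show "\<exists>\<alpha> \<in> Field w. y \<notin> topspace X \<inter> (\<Inter>\<beta> \<in> under w \<alpha>. part \<beta> x)"
    if "x \<in> topspace X" "y \<in> topspace X" "x \<noteq> y" for x y
  proof -
    have "\<exists>U. openin X U \<and> x \<in> U \<and> y \<notin> U"
      using assms(2) that unfolding t1_space_def by simp
    then obtain U where U: "openin X U" "x \<in> U" "y \<notin> U"
      by blast
    then obtain \<alpha> where "\<alpha> \<in> Field w" "topspace X \<inter> (\<Inter>\<beta> \<in> under w \<alpha>. part \<beta> x) \<subseteq> U"
      using base[OF U(1,2)] by blast
    then show ?thesis
      using U(3) by fast
  qed
qed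

lemma underS_card_of_lesspoll:
  assumes "\<alpha> \<in> I"
  shows "underS (card_of I) \<alpha> \<prec> I"
proof -
  have "\<alpha> \<in> Field (card_of I)"
    using assms by (simp add: Field_card_of)
  then have "\<not> (\<exists>f. inj_on f I \<and> f ` I \<subseteq> underS (card_of I) \<alpha>)"
    unfolding card_of_ordLess by (rule card_of_underS[OF card_of_Card_order])
  then have "\<not> underS (card_of I) \<alpha> \<approx> I"
    using eqpoll_sym eqpoll_imp_lepoll unfolding lepoll_def by blast
  moreover have "underS (card_of I) \<alpha> \<subseteq> Field (card_of I)"
    by (rule subset_trans[OF underS_subset_under under_Field])
  ultimately show ?thesis
    unfolding lesspoll_def Field_card_of using subset_imp_lepoll by blast
qed

lemma under_card_of_lesspoll:
  assumes "infinite I" "\<alpha> \<in> I"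
  shows "under (card_of I) \<alpha> \<prec> I"
proof -
  have "under (card_of I) \<alpha> = insert \<alpha> (underS (card_of I) \<alpha>)"
    using Refl_under_underS[OF wo_rel.REFL[OF card_of_Well_order[unfolded wo_rel_def[symmetric]]]]
      assms(2) by (simp add: Field_card_of)
  show ?thesis
  proof (cases "finite (underS (card_of I) \<alpha>)")
    case True
    then have "finite (under (card_of I) \<alpha>)"
      using \<open>under (card_of I) \<alpha> = _\<close> by simp
    then show ?thesis
      by (rule finite_lesspoll_infinite[OF assms(1)])
  next
    case False
    then have "under (card_of I) \<alpha> \<approx> underS (card_of I) \<alpha>"
      using \<open>under (card_of I) \<alpha> = _\<close> infinite_insert_eqpoll by simp
    then show ?thesis
      using underS_card_of_lesspoll[OF assms(2)] eq_lesspoll_trans by blast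
  qed
qed

lemma P_number_nondiscrete:
  assumes "P_number X I" "\<not> discrete_space X"
  shows P_number_infinite: "infinite I"
    and P_number_openin_Inter: "\<And>\<U>. \<lbrakk>\<forall>U \<in> \<U>. openin X U; \<U> \<prec> I\<rbrakk> \<Longrightarrow> openin X (topspace X \<inter> \<Inter>\<U>)"
proof -
  show "\<And>\<U>. \<lbrakk>\<forall>U \<in> \<U>. openin X U; \<U> \<prec> I\<rbrakk> \<Longrightarrow> openin X (topspace X \<inter> \<Inter>\<U>)"
    using assms unfolding P_number_def by simp
  obtain \<U> where \<U>: "\<forall>U \<in> \<U>. openin X U" "\<U> \<lesssim> I" "\<not> openin X (topspace X \<inter> \<Inter>\<U>)"
    using assms unfolding P_number_def by auto
  show "infinite I"
  proof
    assume "finite I"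
    moreover obtain f where "inj_on f \<U>" "f ` \<U> \<subseteq> I"
      using \<U>(2) unfolding lepoll_def by blast
    ultimately have "finite \<U>"
      using inj_on_finite by blast
    then have "openin X (topspace X \<inter> \<Inter>\<U>)"
      using \<U>(1) by (intro openin_Int_Inter) auto
    with \<U>(3) show False ..
  qed
qed

lemma refining_partition_base_of_discrete_clopen_base:
  fixes X :: "'a topology" and I :: "'i set"
  assumes "t1_space X" "infinite I" "has_discrete_clopen_base X I"
    and small_Inter: "\<And>\<U>. \<lbrakk>\<forall>U \<in> \<U>. openin X U; \<U> \<prec> I\<rbrakk> \<Longrightarrow> openin X (topspace X \<inter> \<Inter>\<U>)"
  obtains cell where "refining_partition_base X (card_of I) cell"
proof -
  obtain \<B> :: "'i \<Rightarrow> 'a set set" where disc: "\<forall>\<alpha> \<in> I. discrete_family X (\<B> \<alpha>)"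
    and clopen: "\<forall>\<alpha> \<in> I. \<forall>B \<in> \<B> \<alpha>. openin X B \<and> closedin X B"
    and base: "is_base X (\<Union>\<alpha> \<in> I. \<B> \<alpha>)"
    using assms(3) unfolding has_discrete_clopen_base_def by blast
  have disc_\<beta>: "discrete_family X (\<B> \<beta>)" and clopen_\<beta>: "\<And>B. B \<in> \<B> \<beta> \<Longrightarrow> openin X B \<and> closedin X B"
    if "\<beta> \<in> Field (card_of I)" for \<beta>
    using disc clopen that by (simp_all add: Field_card_of)
  let ?part = "\<lambda>\<beta>. family_cell X (\<B> \<beta>)"
  have "refining_partition_base X (card_of I) (\<lambda>\<alpha> x. topspace X \<inter> (\<Inter>\<beta> \<in> under (card_of I) \<alpha>. ?part \<beta> x))"
  proof (rule refining_partition_base_cumulative[OF card_of_Well_order assms(1)])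
    fix \<beta> x y assume \<beta>: "\<beta> \<in> Field (card_of I)"
    show "x \<in> topspace X \<Longrightarrow> x \<in> ?part \<beta> x"
      by (rule family_cell_self[OF disc_\<beta>[OF \<beta>] clopen_\<beta>[OF \<beta>]])
    show "y \<in> ?part \<beta> x \<Longrightarrow> ?part \<beta> y = ?part \<beta> x"
      by (rule family_cell_eq[OF disc_\<beta>[OF \<beta>] clopen_\<beta>[OF \<beta>]])
  next
    fix \<alpha> x assume "\<alpha> \<in> Field (card_of I)" "x \<in> topspace X"
    then have \<alpha>: "\<alpha> \<in> I"
      by (simp add: Field_card_of)
    have "openin X (?part \<beta> x)" if "\<beta> \<in> under (card_of I) \<alpha>" for \<beta>
    proof -
      have \<beta>: "\<beta> \<in> Field (card_of I)"
        using subsetD[OF under_Field that] .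
      show ?thesis
        by (rule openin_family_cell[OF disc_\<beta>[OF \<beta>] clopen_\<beta>[OF \<beta>]])
    qed
    then have "\<forall>U \<in> (\<lambda>\<beta>. ?part \<beta> x) ` under (card_of I) \<alpha>. openin X U"
      by blast
    moreover have "(\<lambda>\<beta>. ?part \<beta> x) ` under (card_of I) \<alpha> \<prec> I"
      using image_lepoll under_card_of_lesspoll[OF assms(2) \<alpha>] by (rule lesspoll_trans1)
    ultimately show "openin X (topspace X \<inter> (\<Inter>\<beta> \<in> under (card_of I) \<alpha>. ?part \<beta> x))"
      by (rule small_Inter)
  next
    fix U x assume "openin X U" "x \<in> U"
    then obtain B where B: "B \<in> (\<Union>\<alpha> \<in> I. \<B> \<alpha>)" "x \<in> B" "B \<subseteq> U"
      using base unfolding is_base_def by blast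
    then obtain \<beta> where \<beta>: "\<beta> \<in> Field (card_of I)" "B \<in> \<B> \<beta>"
      by (auto simp: Field_card_of)
    then have "?part \<beta> x = B"
      using family_cell_member[OF disc_\<beta>[OF \<beta>(1)] clopen_\<beta>[OF \<beta>(1)] \<beta>(2) B(2)] by simp
    then show "\<exists>\<beta> \<in> Field (card_of I). ?part \<beta> x \<subseteq> U"
      using \<beta>(1) B(3) by auto
  qed
  then show ?thesis
    by (rule that)
qed

theorem theorem2p4:
  fixes X :: "'a topology" and I :: "'i set" and n :: nat
  assumes "tychonoff_space X"
    and "P_number X I"
    and "has_discrete_clopen_base X I"
  shows "GO_space (product_topology (\<lambda>_. X) {..<n})"
proof -
  have power: "GO_space (product_topology (\<lambda>_. X) {..<n})"
    if "refining_partition_base X w cell" "Field w \<noteq> {}" for w :: "'j rel" and cell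
    using refining_partition_base_product[OF that(1) finite_lessThan that(2)]
    by (rule refining_partition_base.GO_space)
  show ?thesis
  proof (cases "discrete_space X")
    case True
    show ?thesis
      using power[OF refining_partition_base_discrete[OF True]] by (simp add: Field_card_of)
  next
    case False
    have "t1_space X"
      using assms(1) unfolding tychonoff_space_def by simp
    then obtain cell where "refining_partition_base X (card_of I) cell"
      using refining_partition_base_of_discrete_clopen_base P_number_infinite[OF assms(2) False]
        assms(3) P_number_openin_Inter[OF assms(2) False] by blast
    moreover have "Field (card_of I) \<noteq> {}"
      using P_number_infinite[OF assms(2) False] by (auto simp: Field_card_of)
    ultimately show ?thesis
      by (rule power)
  qed
qed

end
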